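(* Let $\theta_1,\dots,\theta_{10}$ be real numbers such that $0<\theta_i<\theta_j<\theta_k<180$ for each of the triples $(i,j,k)\in\{(2,4,6),(1,5,9),(1,5,10),(1,5,7),(1,3,7),(1,4,7),(3,5,8),(2,8,9),(6,7,10)\}$, and write $s_{ij}=\sin(\theta_j-\theta_i)$. Suppose $$s_{89}\,s_{1,10}\,s_{24}\,s_{35}\,s_{67}+s_{46}\,s_{19}\,s_{7,10}\,s_{35}\,s_{28}-s_{46}\,s_{38}\,s_{7,10}\,s_{29}\,s_{15}=0 .$$ Then there is no $\mathbf r=(r_1,\dots,r_{10})\in\mathbb{R}^{10}$ satisfying simultaneously the nine strict inequalities $$r_is_{jk}-r_js_{ik}+r_ks_{ij}>0\quad\text{for }(i,j,k)\in\{(2,4,6),(1,5,9),(1,5,10),(1,5,7)\},$$ $$-r_is_{jk}+r_js_{ik}-r_ks_{ij}>0\quad\text{for }(i,j,k)\in\{(1,3,7),(1,4,7),(3,5,8),(2,8,9),(6,7,10)\}.$$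
   Context: Angles are in degrees. *)

theory Defs
  imports Complex_Main
begin

definition sdeg :: "real \<Rightarrow> real" where
  "sdeg x = sin (x * pi / 180)"

definition sij :: "(nat \<Rightarrow> real) \<Rightarrow> nat \<Rightarrow> nat \<Rightarrow> real" where
  "sij th i j = sdeg (th j - th i)"

definition ordered_triple :: "(nat \<Rightarrow> real) \<Rightarrow> nat \<Rightarrow> nat \<Rightarrow> nat \<Rightarrow> bool" where
  "ordered_triple th i j k \<longleftrightarrow> 0 < th i \<and> th i < th j \<and> th j < th k \<and> th k < 180"

definition triple_form :: "(nat \<Rightarrow> real) \<Rightarrow> (nat \<Rightarrow> real) \<Rightarrow> nat \<Rightarrow> nat \<Rightarrow> nat \<Rightarrow> real" where
  "triple_form th r i j k = r i * sij th j k - r j * sij th i k + r k * sij th i j"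

end

theory Submission imports Defs begin

text \<open>
  The eight strict inequalities other than the one for (1,5,7) already suffice: multiplying
  them by suitable products of the positive sines and adding, one obtains an expression that
  is identically equal to \<open>D \<cdot> f\<^sub>1\<^sub>5\<^sub>7\<close>, where \<open>D\<close> is the left-hand side of the
  vanishing hypothesis and \<open>f\<^sub>1\<^sub>5\<^sub>7\<close> the triple form of (1,5,7). This is a polynomial
  identity in the 2\<times>2 minors once each \<open>s\<^sub>i\<^sub>j\<close> is written as the determinant of the
  unit vectors at angles \<open>\<theta>\<^sub>i\<close> and \<open>\<theta>\<^sub>j\<close>. The combination is positive, whereas
  \<open>D = 0\<close>.
\<close>

lemma determinant_certificate_identity:
  fixes c S r :: "nat \<Rightarrow> real" and s :: "nat \<Rightarrow> nat \<Rightarrow> real"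
  assumes s_det: "\<And>i j. s i j = c i * S j - S i * c j"
  defines "f \<equiv> \<lambda>i j k. r i * s j k - r j * s i k + r k * s i j"
  shows "s 8 9 * s 7 10 * s 3 5 * s 1 5 * s 1 7 * f 2 4 6
       + s 4 6 * s 7 10 * s 3 5 * s 2 8 * s 1 7 * f 1 5 9
       + s 8 9 * s 2 4 * s 3 5 * s 6 7 * s 1 7 * f 1 5 10
       + s 4 6 * s 7 10 * s 2 9 * s 1 5 * s 5 8 * - f 1 3 7
       + s 8 9 * s 7 10 * s 3 5 * s 1 5 * s 2 6 * - f 1 4 7
       + s 4 6 * s 7 10 * s 2 9 * s 1 5 * s 1 7 * - f 3 5 8
       + s 4 6 * s 7 10 * s 3 5 * s 1 5 * s 1 7 * - f 2 8 9
       + s 8 9 * s 2 4 * s 3 5 * s 1 5 * s 1 7 * - f 6 7 10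
     = (s 8 9 * s 1 10 * s 2 4 * s 3 5 * s 6 7 + s 4 6 * s 1 9 * s 7 10 * s 3 5 * s 2 8
        - s 4 6 * s 3 8 * s 7 10 * s 2 9 * s 1 5) * f 1 5 7"
  unfolding f_def s_det by algebra

lemma sij_eq_det:
  "sij th i j = cos (th i * pi / 180) * sin (th j * pi / 180) - sin (th i * pi / 180) * cos (th j * pi / 180)"
proof -
  have "(th j - th i) * pi / 180 = th j * pi / 180 - th i * pi / 180"
    by (simp add: field_simps)
  then show ?thesis
    unfolding sij_def sdeg_def by (simp only: sin_diff) (simp add: mult.commute)
qed

lemma sij_pos:
  assumes "th i < th j" "th j < th i + 180"
  shows "0 < sij th i j"
  unfolding sij_def sdeg_def
proof (rule sin_gt_zero)
  show "0 < (th j - th i) * pi / 180" using assms by simp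
  have "(th j - th i) * pi < 180 * pi" using assms by (intro mult_strict_right_mono) auto
  then show "(th j - th i) * pi / 180 < pi" by simp
qed

lemma certificate_pos:
  assumes sines: "0 < sij th 1 5" "0 < sij th 1 7" "0 < sij th 2 4" "0 < sij th 2 6" "0 < sij th 2 8"
      "0 < sij th 2 9" "0 < sij th 3 5" "0 < sij th 4 6" "0 < sij th 5 8" "0 < sij th 6 7"
      "0 < sij th 7 10" "0 < sij th 8 9"
    and forms: "0 < triple_form th r 2 4 6" "0 < triple_form th r 1 5 9" "0 < triple_form th r 1 5 10"
      "0 < - triple_form th r 1 3 7" "0 < - triple_form th r 1 4 7" "0 < - triple_form th r 3 5 8"
      "0 < - triple_form th r 2 8 9" "0 < - triple_form th r 6 7 10"
  shows "0 < (sij th 8 9 * sij th 1 10 * sij th 2 4 * sij th 3 5 * sij th 6 7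
       + sij th 4 6 * sij th 1 9 * sij th 7 10 * sij th 3 5 * sij th 2 8
       - sij th 4 6 * sij th 3 8 * sij th 7 10 * sij th 2 9 * sij th 1 5) * triple_form th r 1 5 7"
  using determinant_certificate_identity[of "sij th", OF sij_eq_det, of r, symmetric]
    sines forms
  unfolding triple_form_def
  by (smt (verit) mult_pos_pos)

theorem lemmal:
  fixes th :: "nat \<Rightarrow> real"
  assumes "\<forall>(i,j,k) \<in> {(2,4,6),(1,5,9),(1,5,10),(1,5,7),(1,3,7),(1,4,7),(3,5,8),(2,8,9),(6,7,10)}.
             ordered_triple th i j k"
    and "sij th 8 9 * sij th 1 10 * sij th 2 4 * sij th 3 5 * sij th 6 7
       + sij th 4 6 * sij th 1 9 * sij th 7 10 * sij th 3 5 * sij th 2 8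
       - sij th 4 6 * sij th 3 8 * sij th 7 10 * sij th 2 9 * sij th 1 5 = 0"
  shows "\<not> (\<exists>r :: nat \<Rightarrow> real.
            (\<forall>(i,j,k) \<in> {(2,4,6),(1,5,9),(1,5,10),(1,5,7)}. triple_form th r i j k > 0)
          \<and> (\<forall>(i,j,k) \<in> {(1,3,7),(1,4,7),(3,5,8),(2,8,9),(6,7,10)}. - triple_form th r i j k > 0))"
proof
  assume "\<exists>r :: nat \<Rightarrow> real.
            (\<forall>(i,j,k) \<in> {(2,4,6),(1,5,9),(1,5,10),(1,5,7)}. triple_form th r i j k > 0)
          \<and> (\<forall>(i,j,k) \<in> {(1,3,7),(1,4,7),(3,5,8),(2,8,9),(6,7,10)}. - triple_form th r i j k > 0)"
  then obtain r where
    pos: "\<forall>(i,j,k) \<in> {(2,4,6),(1,5,9),(1,5,10),(1,5,7)}. triple_form th r i j k > 0" and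
    neg: "\<forall>(i,j,k) \<in> {(1,3,7),(1,4,7),(3,5,8),(2,8,9),(6,7,10)}. - triple_form th r i j k > 0"
    by blast
  have "ordered_triple th 2 4 6" "ordered_triple th 1 5 9" "ordered_triple th 1 5 10"
    "ordered_triple th 1 3 7" "ordered_triple th 3 5 8" "ordered_triple th 2 8 9"
    "ordered_triple th 6 7 10"
    using assms(1) by auto
  then have "0 < (sij th 8 9 * sij th 1 10 * sij th 2 4 * sij th 3 5 * sij th 6 7
       + sij th 4 6 * sij th 1 9 * sij th 7 10 * sij th 3 5 * sij th 2 8
       - sij th 4 6 * sij th 3 8 * sij th 7 10 * sij th 2 9 * sij th 1 5) * triple_form th r 1 5 7"
    using pos neg by (intro certificate_pos) (auto intro: sij_pos simp: ordered_triple_def)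
  then show False using assms(2) by simp
qed

end
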